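(* There is no rigid configuration in $\mathbb{RP}^2$ consisting of fewer than 6 points (counted with multiplicity). Up to projective transformations, there are exactly two rigid configurations of 6 points (counted with multiplicity) in $\mathbb{RP}^2$: (i) three non-collinear points, each of multiplicity $2$; (ii) six distinct points, projectively equivalent to $\{(0:0:1),(1:0:1),(0:1:1),(1:1:1),(1:0:0),(0:1:0)\}$ (six points lying on four lines, each line containing three of the points and each point lying on two of the lines).
   Context: A configuration in $\mathbb{RP}^\ell$ is a finite multiset of points. Its span $\operatorname{span}(A)$ is the smallest projective subspace containing $A$; $A$ is non-degenerate if $\operatorname{span}(A)=\mathbb{RP}^\ell$. $\mathcal H(A)$ denotes the set of all projective hyperplanes of the form $\operatorname{span}(A')$ for some sub-multiset $A'\subseteq A$. For a non-degenerate configuration $A$, a point $a\in A$ is locked if it lies on $\ell$ distinct hyperplanes in $\mathcal H(A\setminus\{a\})$ (where $A\setminus\{a\}$ removes one copy of $a$), and free otherwise. A non-degenerate configuration $A$ is rigid if every point of $A$ is locked. *)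

theory Defs
  imports "HOL-Analysis.Analysis" "HOL-Library.Multiset"
begin

text \<open>Real projective space RP^l is modelled as the set of 1-dimensional linear
subspaces of a real Euclidean space 'a with DIM('a) = l + 1 (for RP^2: real^3).
A configuration is a multiset of such points.\<close>

definition proj_points :: "'a::euclidean_space set set" where
  "proj_points = {span {v} | v. v \<noteq> 0}"

definition pspan :: "'a::euclidean_space set multiset \<Rightarrow> 'a set" where
  "pspan A = span (\<Union> (set_mset A))"

definition nondegenerate :: "'a::euclidean_space set multiset \<Rightarrow> bool" where
  "nondegenerate A \<longleftrightarrow> pspan A = UNIV"

definition hyperplanes_of :: "'a::euclidean_space set multiset \<Rightarrow> 'a set set" where
  "hyperplanes_of A = {pspan A' | A'. A' \<subseteq># A \<and> dim (pspan A') = DIM('a) - 1}"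

text \<open>l = DIM('a) - 1 is the projective dimension.\<close>
definition locked :: "'a::euclidean_space set multiset \<Rightarrow> 'a set \<Rightarrow> bool" where
  "locked A a \<longleftrightarrow> card {H \<in> hyperplanes_of (A - {#a#}). a \<subseteq> H} \<ge> DIM('a) - 1"

definition rigid :: "'a::euclidean_space set multiset \<Rightarrow> bool" where
  "rigid A \<longleftrightarrow> nondegenerate A \<and> (\<forall>a \<in># A. locked A a)"

definition proj_equiv :: "'a::euclidean_space set multiset \<Rightarrow> 'a set multiset \<Rightarrow> bool" where
  "proj_equiv A B \<longleftrightarrow> (\<exists>f. linear f \<and> bij f \<and> image_mset (\<lambda>p. f ` p) A = B)"

definition double_triangle :: "(real^3) set multiset \<Rightarrow> bool" where
  "double_triangle A \<longleftrightarrow> (\<exists>p q r. p \<in> proj_points \<and> q \<in> proj_points \<and> r \<in> proj_points \<and>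
       nondegenerate {#p, q, r#} \<and> A = {#p, p, q, q, r, r#})"

definition six_std :: "(real^3) set multiset" where
  "six_std = image_mset (\<lambda>v. span {v})
     {# vector [0,0,1], vector [1,0,1], vector [0,1,1], vector [1,1,1],
        vector [1,0,0], vector [0,1,0] #}"

end

theory Submission
  imports Defs
begin

text \<open>
  A simple point is locked exactly when it is the meeting point of two distinct lines, each
  spanned by two further points of the configuration. Let A be rigid with at most six points.
  If no point of A is simple, nondegeneracy yields three non-collinear points of multiplicity
  at least two, so A is a doubled triangle. Otherwise a simple point a lies on two lines bc and
  de. A simple point other than a on one of these lines is free as long as all other points lie
  on bc \<union> de, since every line through it spanned by such points is the line it lies on. So
  either b, c, d, e all have multiplicity at least two, giving at least nine points, or there is
  a sixth point f off both lines. Being locked, f lies on the diagonals bd and ce (or be and cd),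
  and the projective frame b, e, a, f identifies A with the standard configuration. Conversely,
  projective equivalences preserve rigidity, and the rigidity of the two standard
  configurations is checked directly, using triple products for the second one.
\<close>

unbundle cross3_syntax

section \<open>Points and lines\<close>

definition proj_line :: "'a::euclidean_space set \<Rightarrow> 'a set \<Rightarrow> 'a set" where
  "proj_line p q = span (p \<union> q)"

lemma proj_pointE:
  assumes "p \<in> proj_points"
  obtains v where "v \<noteq> 0" "p = span {v}"
  using assms unfolding proj_points_def by auto

lemma subspace_proj_point: "p \<in> proj_points \<Longrightarrow> subspace p"
  by (metis proj_pointE subspace_span)

lemma dim_proj_point: "p \<in> proj_points \<Longrightarrow> dim p = 1"
  by (metis proj_pointE dim_span dim_singleton)

lemma span_singleton_subset_iff: "subspace S \<Longrightarrow> span {v} \<subseteq> S \<longleftrightarrow> v \<in> S"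
  using span_base span_minimal by blast

lemma span_singleton_scale:
  assumes "k \<noteq> 0"
  shows "span {k *\<^sub>R v} = span {v}"
proof (rule subset_antisym)
  have "v = inverse k *\<^sub>R (k *\<^sub>R v)"
    using assms by simp
  then have "v \<in> span {k *\<^sub>R v}"
    by (metis span_base span_scale insertI1)
  then show "span {v} \<subseteq> span {k *\<^sub>R v}"
    by (simp add: span_singleton_subset_iff)
qed (simp add: span_singleton_subset_iff span_base span_scale)

lemma lincomb_in_span_pair: "a *\<^sub>R u + b *\<^sub>R v \<in> span {u, v}"
  by (intro span_add span_scale span_base) auto

lemma dim_span_pair_le: "dim (span {u, v}) \<le> 2"
proof -
  have "dim (span {u, v}) \<le> card {u, v}"
    by (simp add: dim_le_card')
  also have "\<dots> \<le> 2"
    by (simp add: card_insert_if)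
  finally show ?thesis .
qed

lemma proj_line_span: "proj_line (span {v}) (span {w}) = span {v, w}"
proof -
  have "span (span {v} \<union> span {w}) = span ({v} \<union> {w})"
    by (simp only: span_Un span_span)
  then show ?thesis
    unfolding proj_line_def by (simp add: insert_commute)
qed

lemma proj_line_commute: "proj_line p q = proj_line q p"
  unfolding proj_line_def by (simp add: Un_commute)

lemma subspace_proj_line [simp]: "subspace (proj_line p q)"
  unfolding proj_line_def by simp

lemma proj_line_upper1: "p \<subseteq> proj_line p q" and proj_line_upper2: "q \<subseteq> proj_line p q"
  unfolding proj_line_def by (auto intro: span_base)

lemma dim_proj_line_le:
  assumes "p \<in> proj_points" "q \<in> proj_points"
  shows "dim (proj_line p q) \<le> 2"
proof -
  obtain v w where "p = span {v}" "q = span {w}"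
    using assms by (metis proj_pointE)
  then show ?thesis
    using dim_span_pair_le[of v w] by (simp add: proj_line_span)
qed

lemma proj_point_eqI:
  assumes "p \<in> proj_points" "q \<in> proj_points" "p \<subseteq> q"
  shows "p = q"
  using assms by (metis subspace_dim_equal subspace_proj_point dim_proj_point order.refl)

lemma not_in_span_singleton:
  fixes v w :: "'a::euclidean_space"
  assumes "w \<noteq> 0" "span {v} \<noteq> span {w}"
  shows "w \<notin> span {v}"
proof
  assume w: "w \<in> span {v}"
  then have "v \<noteq> 0"
    using assms(1) by auto
  then have "span {w} = span {v}"
    using w assms(1)
    by (intro proj_point_eqI) (auto simp: proj_points_def span_singleton_subset_iff)
  then show False
    using assms(2) by simp
qed

lemma dim_proj_line:
  assumes "p \<in> proj_points" "q \<in> proj_points" "p \<noteq> q"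
  shows "dim (proj_line p q) = 2"
proof -
  obtain v w where v: "v \<noteq> 0" "p = span {v}" and w: "w \<noteq> 0" "q = span {w}"
    using assms by (metis proj_pointE)
  then have "dim (insert w {v}) = 2"
    using not_in_span_singleton assms(3) by (simp add: dim_insert)
  then show ?thesis
    using v w by (simp add: proj_line_span insert_commute)
qed

lemma proj_line_unique:
  assumes "subspace H" "dim H \<le> 2" "p \<in> proj_points" "q \<in> proj_points" "p \<noteq> q"
    "p \<subseteq> H" "q \<subseteq> H"
  shows "H = proj_line p q"
proof -
  have "proj_line p q \<subseteq> H"
    unfolding proj_line_def using assms by (simp add: span_minimal)
  then show ?thesis
    using assms dim_proj_line[OF assms(3-5)] subspace_dim_equal[of "proj_line p q" H] by simp
qed

lemma proj_line_through:
  assumes "p \<in> proj_points" "q \<in> proj_points" "r \<in> proj_points" "r \<subseteq> proj_line p q" "r \<noteq> p"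
  shows "proj_line p r = proj_line p q"
  using proj_line_unique[OF subspace_proj_line dim_proj_line_le[OF assms(1,2)] assms(1,3)]
    assms(4,5) proj_line_upper1 by metis

lemma proj_lines_meet_once:
  assumes "subspace L" "dim L \<le> 2" "subspace L'" "dim L' \<le> 2" "L \<noteq> L'"
    "x \<in> proj_points" "y \<in> proj_points" "x \<subseteq> L" "y \<subseteq> L" "x \<subseteq> L'" "y \<subseteq> L'"
  shows "x = y"
  using assms proj_line_unique by metis

lemma nondegenerate_subspace_UNIV:
  assumes "nondegenerate A" "subspace H" "\<And>x. x \<in># A \<Longrightarrow> x \<subseteq> H"
  shows "H = UNIV"
proof -
  have "pspan A \<subseteq> H"
    unfolding pspan_def using assms by (intro span_minimal) auto
  then show ?thesis
    using assms(1) unfolding nondegenerate_def by auto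
qed

lemma nondegenerate_mono: "A \<subseteq># B \<Longrightarrow> nondegenerate A \<Longrightarrow> nondegenerate B"
  unfolding nondegenerate_def pspan_def
  by (metis UNIV_I Union_mono mset_subset_eqD span_mono subsetI subset_antisym)

lemma pspan_triangle: "pspan {#span {u}, span {v}, span {w}#} = span {u, v, w}"
proof -
  have "span (span {u} \<union> span {v} \<union> span {w}) = span ({u} \<union> {v} \<union> {w})"
    by (simp only: span_Un span_span)
  then show ?thesis
    unfolding pspan_def by (simp add: insert_commute Un_assoc)
qed

lemma nondegenerate_not_on_line:
  fixes A :: "(real^3) set multiset"
  assumes "nondegenerate A" "subspace H" "dim H \<le> 2"
  obtains x where "x \<in># A" "\<not> x \<subseteq> H"
proof -
  have "H \<noteq> UNIV"
    using assms(3) by auto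
  then show ?thesis
    using nondegenerate_subspace_UNIV[OF assms(1,2)] that by blast
qed

lemma nondegenerate_triangle_iff:
  fixes p q r :: "(real^3) set"
  assumes "p \<in> proj_points" "q \<in> proj_points" "r \<in> proj_points"
  shows "nondegenerate {#p, q, r#} \<longleftrightarrow> p \<noteq> q \<and> \<not> r \<subseteq> proj_line p q"
proof
  assume nd: "nondegenerate {#p, q, r#}"
  have not_all: "\<not> (p \<subseteq> H \<and> q \<subseteq> H \<and> r \<subseteq> H)" if H: "subspace H" "dim H \<le> 2" for H
  proof
    assume all: "p \<subseteq> H \<and> q \<subseteq> H \<and> r \<subseteq> H"
    obtain x where "x \<in># {#p, q, r#}" "\<not> x \<subseteq> H"
      by (rule nondegenerate_not_on_line[OF nd H])
    then show False
      using all by auto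
  qed
  have "p \<noteq> q"
    using not_all[OF subspace_proj_line dim_proj_line_le[OF assms(1,3)]]
      proj_line_upper1[of p r] proj_line_upper2[of r p] by blast
  moreover have "\<not> r \<subseteq> proj_line p q"
    using not_all[OF subspace_proj_line dim_proj_line_le[OF assms(1,2)]]
      proj_line_upper1[of p q] proj_line_upper2[of q p] by blast
  ultimately show "p \<noteq> q \<and> \<not> r \<subseteq> proj_line p q"
    by blast
next
  assume "p \<noteq> q \<and> \<not> r \<subseteq> proj_line p q"
  moreover obtain u v w where "u \<noteq> 0" "p = span {u}" "v \<noteq> 0" "q = span {v}"
    "w \<noteq> 0" "r = span {w}"
    using assms by (metis proj_pointE)
  ultimately have "v \<notin> span {u}" "w \<notin> span {v, u}"
    using not_in_span_singleton
    by (auto simp: proj_line_span span_singleton_subset_iff insert_commute)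
  then have "dim {w, v, u} = DIM(real^3)"
    using \<open>u \<noteq> 0\<close> by (simp add: dim_insert)
  then have "span {u, v, w} = UNIV"
    using dim_eq_full by (metis insert_commute)
  then show "nondegenerate {#p, q, r#}"
    unfolding nondegenerate_def using \<open>p = span {u}\<close> \<open>q = span {v}\<close> \<open>r = span {w}\<close>
    by (simp add: pspan_triangle)
qed

section \<open>Hyperplanes and locked points in the plane\<close>

lemma finite_hyperplanes_of: "finite (hyperplanes_of M)"
proof (rule finite_subset)
  show "hyperplanes_of M \<subseteq> (\<lambda>S. span (\<Union> S)) ` Pow (set_mset M)"
    unfolding hyperplanes_of_def pspan_def by (auto intro!: imageI dest: mset_subset_eqD)
qed simp

lemma dim_pspan_le_card:
  fixes B :: "'a::euclidean_space set multiset"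
  assumes "set_mset B \<subseteq> proj_points"
  shows "dim (pspan B) \<le> card (set_mset B)"
proof -
  have "\<forall>p \<in> set_mset B. \<exists>v. span {v} = p"
    using assms by (metis proj_pointE subsetD)
  then obtain v where spans: "\<And>p. p \<in># B \<Longrightarrow> span {v p} = p"
    by (metis bchoice)
  have mem: "v p \<in> \<Union> (set_mset B)" if "p \<in># B" for p
    using span_base[of "v p" "{v p}"] that spans[OF that] by auto
  have "p \<subseteq> span (v ` set_mset B)" if "p \<in># B" for p
    using span_mono[of "{v p}" "v ` set_mset B"] that spans[OF that] by auto
  then have "\<Union> (set_mset B) \<subseteq> span (v ` set_mset B)"
    by blast
  moreover have "v ` set_mset B \<subseteq> span (\<Union> (set_mset B))"
    using mem by (auto intro: span_base)
  ultimately have "pspan B = span (v ` set_mset B)"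
    unfolding pspan_def by (simp add: span_eq)
  then have "dim (pspan B) = dim (v ` set_mset B)"
    by simp
  also have "\<dots> \<le> card (v ` set_mset B)"
    by (simp add: dim_le_card')
  also have "\<dots> \<le> card (set_mset B)"
    by (simp add: card_image_le)
  finally show ?thesis .
qed

lemma proj_line_in_hyperplanes_of:
  fixes B :: "(real^3) set multiset"
  assumes "p \<in> proj_points" "q \<in> proj_points" "p \<noteq> q" "p \<in># B" "q \<in># B"
  shows "proj_line p q \<in> hyperplanes_of B"
proof -
  have "{#p, q#} \<subseteq># B"
    using assms(3-5) by (simp add: insert_subset_eq_iff in_diff_count)
  moreover have "pspan {#p, q#} = proj_line p q"
    by (simp add: pspan_def proj_line_def)
  ultimately show ?thesis
    unfolding hyperplanes_of_def using dim_proj_line[OF assms(1-3)]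
    by (intro CollectI exI[of _ "{#p, q#}"]) simp
qed

lemma hyperplanes_ofE:
  fixes B :: "(real^3) set multiset"
  assumes "set_mset B \<subseteq> proj_points" "H \<in> hyperplanes_of B"
  obtains p q where "p \<in># B" "q \<in># B" "p \<noteq> q" "H = proj_line p q"
proof -
  obtain B' where B': "B' \<subseteq># B" "H = pspan B'" "dim H = 2"
    using assms(2) unfolding hyperplanes_of_def by auto
  then have points: "set_mset B' \<subseteq> proj_points"
    using assms(1) by (auto dest: mset_subset_eqD)
  then have "\<not> card (set_mset B') \<le> Suc 0"
    using dim_pspan_le_card[OF points] B'(2,3) by simp
  then have "\<not> (\<forall>p \<in># B'. \<forall>q \<in># B'. p = q)"
    using card_le_Suc0_iff_eq[of "set_mset B'"] by simp
  then obtain p q where pq: "p \<in># B'" "q \<in># B'" "p \<noteq> q"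
    by blast
  have "p \<subseteq> H" "q \<subseteq> H"
    unfolding B'(2) pspan_def using pq by (auto intro: span_base)
  then have "H = proj_line p q"
    using pq points B' by (intro proj_line_unique) (auto simp: pspan_def)
  moreover have "p \<in># B" "q \<in># B"
    using pq B'(1) by (auto dest: mset_subset_eqD)
  ultimately show ?thesis
    using that pq(3) by blast
qed

lemma lockedI:
  fixes A :: "(real^3) set multiset"
  assumes "p \<in> proj_points" "q \<in> proj_points" "r \<in> proj_points" "s \<in> proj_points"
    "p \<in># A - {#x#}" "q \<in># A - {#x#}" "r \<in># A - {#x#}" "s \<in># A - {#x#}"
    "p \<noteq> q" "r \<noteq> s" "x \<subseteq> proj_line p q" "x \<subseteq> proj_line r s"
    "proj_line p q \<noteq> proj_line r s"
  shows "locked A x"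
proof -
  let ?X = "{H \<in> hyperplanes_of (A - {#x#}). x \<subseteq> H}"
  have "{proj_line p q, proj_line r s} \<subseteq> ?X"
    using assms proj_line_in_hyperplanes_of by auto
  then have "card {proj_line p q, proj_line r s} \<le> card ?X"
    by (rule card_mono[rotated]) (simp add: finite_hyperplanes_of)
  then show ?thesis
    unfolding locked_def using assms(13) by simp
qed

lemma lockedE:
  fixes A :: "(real^3) set multiset"
  assumes "set_mset A \<subseteq> proj_points" "locked A x"
  obtains p q r s where
    "p \<in># A - {#x#}" "q \<in># A - {#x#}" "r \<in># A - {#x#}" "s \<in># A - {#x#}"
    "p \<noteq> q" "r \<noteq> s" "x \<subseteq> proj_line p q" "x \<subseteq> proj_line r s"
    "proj_line p q \<noteq> proj_line r s"
proof -
  let ?X = "{H \<in> hyperplanes_of (A - {#x#}). x \<subseteq> H}"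
  have fin: "finite ?X"
    using finite_hyperplanes_of[of "A - {#x#}"] by (rule rev_finite_subset) auto
  have "\<not> (\<forall>H\<in>?X. \<forall>H'\<in>?X. H = H')"
    using assms(2) unfolding locked_def card_le_Suc0_iff_eq[OF fin, symmetric] by simp
  then obtain H H' where H: "H \<in> ?X" "H' \<in> ?X" "H \<noteq> H'"
    by blast
  have points: "set_mset (A - {#x#}) \<subseteq> proj_points"
    using assms(1) by (auto dest: in_diffD)
  from H(1) have "H \<in> hyperplanes_of (A - {#x#})"
    by simp
  then obtain p q where "p \<in># A - {#x#}" "q \<in># A - {#x#}" "p \<noteq> q" "H = proj_line p q"
    by (rule hyperplanes_ofE[OF points])
  moreover from H(2) have "H' \<in> hyperplanes_of (A - {#x#})"
    by simp
  then obtain r s where "r \<in># A - {#x#}" "s \<in># A - {#x#}" "r \<noteq> s" "H' = proj_line r s"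
    by (rule hyperplanes_ofE[OF points])
  ultimately show ?thesis
    using that H by blast
qed

lemma in_diff_single_simple: "count A x = 1 \<Longrightarrow> y \<in># A - {#x#} \<longleftrightarrow> y \<in># A \<and> y \<noteq> x"
  by (auto simp: in_diff_count)

lemma proj_line_eq_through_line_point:
  assumes lines: "subspace L" "dim L \<le> 2" "subspace L'" "dim L' \<le> 2"
    and x: "x \<in> proj_points" "x \<subseteq> L" "\<not> x \<subseteq> L'"
    and uw: "u \<in> proj_points" "w \<in> proj_points" "u \<noteq> w" "u \<noteq> x" "w \<noteq> x"
      "u \<subseteq> L \<or> u \<subseteq> L'" "w \<subseteq> L \<or> w \<subseteq> L'"
    and through: "x \<subseteq> proj_line u w"
  shows "proj_line u w = L"
proof (cases "u \<subseteq> L \<or> w \<subseteq> L")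
  case True
  then obtain v where v: "v \<in> {u, w}" "v \<subseteq> L"
    by blast
  then have v': "v \<in> proj_points" "x \<noteq> v" "v \<subseteq> proj_line u w"
    using uw proj_line_upper1[of u w] proj_line_upper2[of w u] by auto
  have "proj_line u w = proj_line x v"
    by (rule proj_line_unique[OF subspace_proj_line dim_proj_line_le[OF uw(1,2)] x(1) v'(1,2)
          through v'(3)])
  moreover have "L = proj_line x v"
    by (rule proj_line_unique[OF lines(1,2) x(1) v'(1,2) x(2) v(2)])
  ultimately show ?thesis
    by simp
next
  case False
  then have "u \<subseteq> L'" "w \<subseteq> L'"
    using uw(6,7) by blast+
  then have "L' = proj_line u w"
    by (rule proj_line_unique[OF lines(3,4) uw(1-3)])
  then show ?thesis
    using x(3) through by simp
qed

lemma not_locked_if_others_on_two_lines: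
  fixes A :: "(real^3) set multiset"
  assumes points: "set_mset A \<subseteq> proj_points" and simple: "count A x = 1"
    and lines: "subspace L" "dim L \<le> 2" "subspace L'" "dim L' \<le> 2"
    and x: "x \<subseteq> L" "\<not> x \<subseteq> L'"
    and others: "\<And>y. y \<in># A \<Longrightarrow> y \<noteq> x \<Longrightarrow> y \<subseteq> L \<or> y \<subseteq> L'"
  shows "\<not> locked A x"
proof
  have "x \<in># A"
    using simple by (intro count_inI) simp
  then have "x \<in> proj_points"
    using points by blast
  have others': "u \<in> proj_points" "u \<noteq> x" "u \<subseteq> L \<or> u \<subseteq> L'" if "u \<in># A - {#x#}" for u
    using that points others in_diff_single_simple[OF simple] by blast+
  have line_eq: "proj_line u w = L"
    if "u \<in># A - {#x#}" "w \<in># A - {#x#}" "u \<noteq> w" "x \<subseteq> proj_line u w" for u w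
    using proj_line_eq_through_line_point[OF lines \<open>x \<in> proj_points\<close> x] others'[OF that(1)]
      others'[OF that(2)] that(3,4) by blast
  assume "locked A x"
  with points obtain p q r s where
    "p \<in># A - {#x#}" "q \<in># A - {#x#}" "r \<in># A - {#x#}" "s \<in># A - {#x#}"
    "p \<noteq> q" "r \<noteq> s" "x \<subseteq> proj_line p q" "x \<subseteq> proj_line r s"
    "proj_line p q \<noteq> proj_line r s"
    by (rule lockedE)
  then show False
    using line_eq by metis
qed

section \<open>Projective equivalence and projective frames\<close>

lemma proj_equiv_sym:
  assumes "proj_equiv A B"
  shows "proj_equiv B A"
proof -
  obtain f where f: "linear f" "bij f" "image_mset ((`) f) A = B"
    using assms unfolding proj_equiv_def by blast
  have "image_mset ((`) (inv f)) B = A"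
    using f by (auto simp: multiset.map_comp comp_def image_inv_f_f bij_is_inj)
  then show ?thesis
    unfolding proj_equiv_def using f
    by (metis bij_imp_bij_inv bij_is_inj inj_linear_imp_inv_linear)
qed

lemma proj_equiv_trans:
  assumes "proj_equiv A B" "proj_equiv B C"
  shows "proj_equiv A C"
proof -
  obtain f where f: "linear f" "bij f" "image_mset ((`) f) A = B"
    using assms(1) unfolding proj_equiv_def by blast
  obtain g where g: "linear g" "bij g" "image_mset ((`) g) B = C"
    using assms(2) unfolding proj_equiv_def by blast
  have "image_mset ((`) (g \<circ> f)) A = C"
    using f(3) g(3) by (auto simp: multiset.map_comp comp_def image_comp)
  then show ?thesis
    unfolding proj_equiv_def using linear_compose[OF f(1) g(1)] bij_comp[OF f(2) g(2)] by blast
qed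

lemma inj_imp_inj_image: "inj f \<Longrightarrow> inj ((`) f)"
  by (simp add: inj_def inj_image_eq_iff)

lemma card_set_mset_proj_equiv:
  assumes "proj_equiv A B"
  shows "card (set_mset B) = card (set_mset A)"
  using assms unfolding proj_equiv_def
  by (auto simp: card_image inj_imp_inj_image bij_is_inj inj_on_subset[of _ UNIV])

lemma size_proj_equiv: "proj_equiv A B \<Longrightarrow> size B = size A"
  unfolding proj_equiv_def by auto

lemma pspan_image:
  "linear f \<Longrightarrow> pspan (image_mset ((`) f) A) = f ` pspan A"
  unfolding pspan_def by (simp add: span_linear_image image_Union[symmetric])

lemma image_hyperplanes_of_subset:
  fixes f :: "'a::euclidean_space \<Rightarrow> 'a"
  assumes "linear f" "inj f"
  shows "(`) f ` hyperplanes_of B \<subseteq> hyperplanes_of (image_mset ((`) f) B)"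
proof
  fix H'
  assume "H' \<in> (`) f ` hyperplanes_of B"
  then obtain B' where B': "B' \<subseteq># B" "dim (pspan B') = DIM('a) - 1" "H' = f ` pspan B'"
    unfolding hyperplanes_of_def by auto
  have "image_mset ((`) f) B' \<subseteq># image_mset ((`) f) B"
    using B'(1) by (rule image_mset_subseteq_mono)
  moreover have "dim (f ` pspan B') = dim (pspan B')"
    using assms by (intro dim_image_eq) (auto intro: inj_on_subset)
  ultimately show "H' \<in> hyperplanes_of (image_mset ((`) f) B)"
    unfolding hyperplanes_of_def using B' assms(1)
    by (intro CollectI exI[of _ "image_mset ((`) f) B'"]) (simp add: pspan_image)
qed

lemma locked_image:
  fixes f :: "'a::euclidean_space \<Rightarrow> 'a"
  assumes "linear f" "inj f" "a \<in># A" "locked A a"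
  shows "locked (image_mset ((`) f) A) (f ` a)"
proof -
  let ?X = "{H \<in> hyperplanes_of (A - {#a#}). a \<subseteq> H}"
  let ?Y = "{H \<in> hyperplanes_of (image_mset ((`) f) A - {#f ` a#}). f ` a \<subseteq> H}"
  have "image_mset ((`) f) A - {#f ` a#} = image_mset ((`) f) (A - {#a#})"
    using assms(3) by (simp add: image_mset_Diff)
  then have "(`) f ` ?X \<subseteq> ?Y"
    using image_hyperplanes_of_subset[OF assms(1,2), of "A - {#a#}"] by auto
  moreover have "finite ?Y"
    using finite_hyperplanes_of by (rule rev_finite_subset) auto
  ultimately have "card ((`) f ` ?X) \<le> card ?Y"
    by (simp add: card_mono)
  moreover have "card ((`) f ` ?X) = card ?X"
    using inj_imp_inj_image[OF assms(2)] by (simp add: card_image inj_on_subset[of _ UNIV])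
  ultimately show ?thesis
    using assms(4) unfolding locked_def by simp
qed

lemma rigid_proj_equiv:
  assumes "proj_equiv A B" "rigid A"
  shows "rigid B"
proof -
  obtain f where f: "linear f" "bij f" "image_mset ((`) f) A = B"
    using assms(1) unfolding proj_equiv_def by blast
  have "nondegenerate B"
    using assms(2) f by (auto simp: rigid_def nondegenerate_def pspan_image bij_is_surj)
  moreover have "locked B b" if "b \<in># B" for b
    using that assms(2) f locked_image[OF f(1) bij_is_inj[OF f(2)]] by (auto simp: rigid_def)
  ultimately show ?thesis
    unfolding rigid_def by blast
qed

definition frame_map :: "real^3 \<Rightarrow> real^3 \<Rightarrow> real^3 \<Rightarrow> real^3 \<Rightarrow> real^3" where
  "frame_map x y z t = t$1 *\<^sub>R x + t$2 *\<^sub>R y + t$3 *\<^sub>R z"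

lemma linear_frame_map: "linear (frame_map x y z)"
  unfolding linear_iff frame_map_def by (simp add: algebra_simps)

lemma frame_map_span_vector:
  "frame_map x y z ` span {vector [a, b, c]} = span {a *\<^sub>R x + b *\<^sub>R y + c *\<^sub>R z}"
  using span_linear_image[OF linear_frame_map, of x y z "{vector [a, b, c]}"]
  by (simp add: frame_map_def)

lemma frame_map_vector: "frame_map x y z (vector [a, b, c]) = a *\<^sub>R x + b *\<^sub>R y + c *\<^sub>R z"
  by (simp add: frame_map_def)

lemma bij_frame_map:
  assumes "span {x, y, z} = UNIV"
  shows "bij (frame_map x y z)"
proof -
  have "x = frame_map x y z (vector [1, 0, 0])" "y = frame_map x y z (vector [0, 1, 0])"
    "z = frame_map x y z (vector [0, 0, 1])"
    by (simp_all add: frame_map_vector)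
  then have "{x, y, z} \<subseteq> range (frame_map x y z)"
    by (blast intro: range_eqI)
  moreover have "subspace (range (frame_map x y z))"
    by (rule linear_subspace_image[OF linear_frame_map subspace_UNIV])
  ultimately have "span {x, y, z} \<subseteq> range (frame_map x y z)"
    by (rule span_minimal)
  then have "surj (frame_map x y z)"
    using assms by blast
  then show ?thesis
    using linear_surjective_imp_injective[OF linear_frame_map] by (simp add: bij_def)
qed

lemma proj_equiv_frame_map:
  "span {x, y, z} = UNIV \<Longrightarrow> proj_equiv M (image_mset ((`) (frame_map x y z)) M)"
  unfolding proj_equiv_def using linear_frame_map bij_frame_map by blast

lemma projective_frameE:
  fixes p1 p2 p3 p4 :: "(real^3) set"
  assumes points: "p1 \<in> proj_points" "p2 \<in> proj_points" "p3 \<in> proj_points" "p4 \<in> proj_points"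
    and nd: "nondegenerate {#p1, p2, p3#}"
    and off: "\<not> p4 \<subseteq> proj_line p2 p3" "\<not> p4 \<subseteq> proj_line p1 p3" "\<not> p4 \<subseteq> proj_line p1 p2"
  obtains x y z where "span {x, y, z} = UNIV" "p1 = span {x}" "p2 = span {y}" "p3 = span {z}"
    "p4 = span {x + y + z}"
proof -
  obtain u v w t where uvw: "p1 = span {u}" "p2 = span {v}" "p3 = span {w}" "p4 = span {t}"
    using points by (meson proj_pointE)
  then have basis: "span {u, v, w} = UNIV"
    using nd by (simp add: nondegenerate_def pspan_triangle)
  then obtain s where "t = frame_map u v w s"
    using surjD[OF bij_is_surj[OF bij_frame_map]] by blast
  then have t: "t = s$1 *\<^sub>R u + s$2 *\<^sub>R v + s$3 *\<^sub>R w"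
    by (simp add: frame_map_def)
  have on_line: "p4 \<subseteq> proj_line p q"
    if "p = span {u'}" "q = span {v'}" "t = \<alpha> *\<^sub>R u' + \<beta> *\<^sub>R v'" for p q u' v' \<alpha> \<beta>
    using that uvw(4) lincomb_in_span_pair by (simp add: proj_line_span span_singleton_subset_iff)
  have "s$1 \<noteq> 0"
    using on_line[OF uvw(2,3), of "s$2" "s$3"] off(1) t by force
  moreover have "s$2 \<noteq> 0"
    using on_line[OF uvw(1,3), of "s$1" "s$3"] off(2) t by force
  moreover have "s$3 \<noteq> 0"
    using on_line[OF uvw(1,2), of "s$1" "s$2"] off(3) t by force
  ultimately have spans: "span {s$1 *\<^sub>R u} = p1" "span {s$2 *\<^sub>R v} = p2" "span {s$3 *\<^sub>R w} = p3"
    using uvw by (simp_all add: span_singleton_scale)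
  then have "span {s$1 *\<^sub>R u, s$2 *\<^sub>R v, s$3 *\<^sub>R w} = UNIV"
    using pspan_triangle[of "s$1 *\<^sub>R u" "s$2 *\<^sub>R v" "s$3 *\<^sub>R w"] pspan_triangle[of u v w] basis uvw
    by simp
  then show ?thesis
    by (rule that) (use spans t uvw(4) in simp_all)
qed

lemma frame_diagonal_point:
  fixes x y z :: "real^3"
  assumes "span {x} \<noteq> span {z}" "p \<in> proj_points"
    "p \<subseteq> span {x, z}" "p \<subseteq> span {y, x + y + z}" "span {x, z} \<noteq> span {y, x + y + z}"
  shows "p = span {x + z}"
proof (rule proj_lines_meet_once[OF subspace_span dim_span_pair_le subspace_span dim_span_pair_le
      assms(5) assms(2) _ assms(3) _ assms(4)])
  have "x + z \<noteq> 0"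
  proof
    assume "x + z = 0"
    then have "z = (-1) *\<^sub>R x"
      by (simp add: add_eq_0_iff)
    then show False
      using assms(1) span_singleton_scale[of "-1" x] by simp
  qed
  then show "span {x + z} \<in> proj_points"
    by (auto simp: proj_points_def)
  have "x + z = 1 *\<^sub>R x + 1 *\<^sub>R z" "x + z = (-1) *\<^sub>R y + 1 *\<^sub>R (x + y + z)"
    by simp_all
  then show "span {x + z} \<subseteq> span {x, z}" "span {x + z} \<subseteq> span {y, x + y + z}"
    using lincomb_in_span_pair by (metis span_singleton_subset_iff subspace_span)+
qed

section \<open>The two rigid configurations\<close>

lemmas cross3_eval = cross3_def inner_vec_def sum_3 vec_eq_iff forall_3

lemma span_singleton_neq_cross:
  assumes "v \<times> w \<noteq> 0"
  shows "span {v} \<noteq> span {w}"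
proof
  assume "span {v} = span {w}"
  then obtain k where "v = k *\<^sub>R w"
    using span_base[of v "{v}"] by (auto simp: span_singleton)
  then show False
    using assms by (simp add: cross_mult_left)
qed

lemma in_span_pair_iff_triple:
  fixes u v w :: "real^3"
  assumes "u \<times> w \<noteq> 0"
  shows "v \<in> span {u, w} \<longleftrightarrow> v \<bullet> (u \<times> w) = 0"
proof -
  let ?P = "{x. (u \<times> w) \<bullet> x = 0}"
  have "u \<in> ?P" "w \<in> ?P"
    by (simp_all add: dot_cross_self inner_commute)
  then have sub: "span {u, w} \<subseteq> ?P"
    by (intro span_minimal) (auto simp: subspace_hyperplane)
  have "u \<noteq> 0" "w \<noteq> 0"
    using assms by auto
  then have "dim (proj_line (span {u}) (span {w})) = 2"
    using span_singleton_neq_cross[OF assms] by (intro dim_proj_line) (auto simp: proj_points_def)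
  then have "dim (span {u, w}) = dim ?P"
    using dim_hyperplane[OF assms] by (simp add: proj_line_span)
  then have "span {u, w} = ?P"
    using sub by (intro subspace_dim_equal) (auto simp: subspace_hyperplane)
  then show ?thesis
    by (simp add: inner_commute)
qed

lemma proj_point_on_line_iff_triple:
  fixes u v w :: "real^3"
  assumes "u \<times> w \<noteq> 0"
  shows "span {v} \<subseteq> proj_line (span {u}) (span {w}) \<longleftrightarrow> v \<bullet> (u \<times> w) = 0"
  using in_span_pair_iff_triple[OF assms] by (simp add: proj_line_span span_singleton_subset_iff)

lemma locked_by_triple_products:
  fixes A :: "(real^3) set multiset" and a b c d e :: "real^3"
  assumes "span {b} \<in># A" "span {c} \<in># A" "span {d} \<in># A" "span {e} \<in># A"
    "a \<times> b \<noteq> 0" "a \<times> c \<noteq> 0" "a \<times> d \<noteq> 0" "a \<times> e \<noteq> 0" "b \<times> c \<noteq> 0" "d \<times> e \<noteq> 0"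
    "a \<bullet> (b \<times> c) = 0" "a \<bullet> (d \<times> e) = 0" "b \<bullet> (d \<times> e) \<noteq> 0"
  shows "locked A (span {a})"
proof (rule lockedI)
  have "b \<noteq> 0" "c \<noteq> 0" "d \<noteq> 0" "e \<noteq> 0"
    using assms(5-8) by auto
  then show "span {b} \<in> proj_points" "span {c} \<in> proj_points"
    "span {d} \<in> proj_points" "span {e} \<in> proj_points"
    by (auto simp: proj_points_def)
  show "span {b} \<in># A - {#span {a}#}" "span {c} \<in># A - {#span {a}#}"
    "span {d} \<in># A - {#span {a}#}" "span {e} \<in># A - {#span {a}#}"
    using assms(1-8) span_singleton_neq_cross by (auto simp: in_diff_count)
  show "span {b} \<noteq> span {c}" "span {d} \<noteq> span {e}"
    using assms(9,10) by (auto dest: span_singleton_neq_cross)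
  show "span {a} \<subseteq> proj_line (span {b}) (span {c})" "span {a} \<subseteq> proj_line (span {d}) (span {e})"
    using assms(9-12) by (simp_all add: proj_point_on_line_iff_triple)
  show "proj_line (span {b}) (span {c}) \<noteq> proj_line (span {d}) (span {e})"
    using assms(10,13) proj_line_upper1 proj_point_on_line_iff_triple by metis
qed

lemma nondegenerate_triangle_triple:
  fixes u v w :: "real^3"
  assumes "w \<bullet> (u \<times> v) \<noteq> 0"
  shows "nondegenerate {#span {u}, span {v}, span {w}#}"
proof -
  have "u \<times> v \<noteq> 0"
    using assms by auto
  then have "u \<noteq> 0" "v \<noteq> 0" "w \<noteq> 0"
    using assms by auto
  then show ?thesis
    using assms \<open>u \<times> v \<noteq> 0\<close>
    by (subst nondegenerate_triangle_iff)
      (auto simp: proj_points_def proj_point_on_line_iff_triple dest: span_singleton_neq_cross)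
qed

lemma rigid_six_std: "rigid six_std"
proof -
  have "{#span {vector [1, 0, 0]}, span {vector [0, 1, 0]}, span {vector [0, 0, 1]}#} \<subseteq># six_std"
    by (simp add: six_std_def)
  then have "nondegenerate six_std"
    by (rule nondegenerate_mono) (rule nondegenerate_triangle_triple, simp add: cross3_eval)
  moreover have "locked six_std (span {vector [0, 0, 1]})"
    by (rule locked_by_triple_products[where b = "vector [1, 0, 0]" and c = "vector [1, 0, 1]"
          and d = "vector [0, 1, 1]" and e = "vector [0, 1, 0]"])
      (simp_all add: six_std_def cross3_eval)
  moreover have "locked six_std (span {vector [1, 0, 1]})"
    by (rule locked_by_triple_products[where b = "vector [0, 0, 1]" and c = "vector [1, 0, 0]"
          and d = "vector [0, 1, 0]" and e = "vector [1, 1, 1]"])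
      (simp_all add: six_std_def cross3_eval)
  moreover have "locked six_std (span {vector [0, 1, 1]})"
    by (rule locked_by_triple_products[where b = "vector [0, 0, 1]" and c = "vector [0, 1, 0]"
          and d = "vector [1, 0, 0]" and e = "vector [1, 1, 1]"])
      (simp_all add: six_std_def cross3_eval)
  moreover have "locked six_std (span {vector [1, 1, 1]})"
    by (rule locked_by_triple_products[where b = "vector [1, 0, 0]" and c = "vector [0, 1, 1]"
          and d = "vector [1, 0, 1]" and e = "vector [0, 1, 0]"])
      (simp_all add: six_std_def cross3_eval)
  moreover have "locked six_std (span {vector [1, 0, 0]})"
    by (rule locked_by_triple_products[where b = "vector [0, 0, 1]" and c = "vector [1, 0, 1]"
          and d = "vector [0, 1, 1]" and e = "vector [1, 1, 1]"])
      (simp_all add: six_std_def cross3_eval)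
  moreover have "locked six_std (span {vector [0, 1, 0]})"
    by (rule locked_by_triple_products[where b = "vector [0, 0, 1]" and c = "vector [0, 1, 1]"
          and d = "vector [1, 0, 1]" and e = "vector [1, 1, 1]"])
      (simp_all add: six_std_def cross3_eval)
  ultimately show ?thesis
    unfolding rigid_def by (simp add: six_std_def)
qed

lemma card_set_mset_six_std: "card (set_mset six_std) = 6"
  by (simp add: six_std_def span_singleton_neq_cross cross3_eval)

lemma size_six_std: "size six_std = 6"
  by (simp add: six_std_def)

lemma double_triangleE:
  assumes "double_triangle A"
  obtains x y z where "span {x, y, z} = UNIV"
    "A = {#span {x}, span {x}, span {y}, span {y}, span {z}, span {z}#}"
proof -
  obtain p q r where pqr: "p \<in> proj_points" "q \<in> proj_points" "r \<in> proj_points"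
    "nondegenerate {#p, q, r#}" "A = {#p, p, q, q, r, r#}"
    using assms unfolding double_triangle_def by blast
  obtain x y z where "p = span {x}" "q = span {y}" "r = span {z}"
    using pqr(1-3) by (metis proj_pointE)
  then show ?thesis
    using that pqr(4,5) by (simp add: nondegenerate_def pspan_triangle)
qed

lemma proj_equiv_double_triangles:
  assumes "double_triangle A" "double_triangle B"
  shows "proj_equiv A B"
proof -
  define E :: "(real^3) set multiset" where
    "E = {#span {vector [1, 0, 0]}, span {vector [1, 0, 0]}, span {vector [0, 1, 0]},
      span {vector [0, 1, 0]}, span {vector [0, 0, 1]}, span {vector [0, 0, 1]}#}"
  have "proj_equiv E D" if D: "double_triangle D" for D
  proof -
    obtain x y z where "span {x, y, z} = UNIV"
      "D = {#span {x}, span {x}, span {y}, span {y}, span {z}, span {z}#}"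
      using D by (rule double_triangleE)
    then show ?thesis
      using proj_equiv_frame_map[of x y z E] by (simp add: E_def frame_map_span_vector)
  qed
  then show ?thesis
    using assms proj_equiv_sym proj_equiv_trans by blast
qed

lemma nondegenerate_double_triangle: "double_triangle A \<Longrightarrow> nondegenerate A"
  unfolding double_triangle_def
  by (auto elim!: nondegenerate_mono[rotated] simp: insert_subset_eq_iff)

lemma rigid_double_triangle:
  assumes "double_triangle A"
  shows "rigid A"
proof -
  obtain p q r where pqr: "p \<in> proj_points" "q \<in> proj_points" "r \<in> proj_points"
    "nondegenerate {#p, q, r#}" "A = {#p, p, q, q, r, r#}"
    using assms unfolding double_triangle_def by blast
  have "locked A p" if "p \<in> proj_points" "q \<in> proj_points" "r \<in> proj_points"
    "nondegenerate {#p, q, r#}" "A = {#p, p, q, q, r, r#}"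
    for A :: "(real^3) set multiset" and p q r
  proof (rule lockedI[of p q p r])
    have "p \<noteq> q" "p \<noteq> r" "\<not> r \<subseteq> proj_line p q"
      using that nondegenerate_triangle_iff[of p q r] nondegenerate_triangle_iff[of p r q]
      by (auto simp: add_mset_commute)
    then show "p \<noteq> q" "p \<noteq> r" "proj_line p q \<noteq> proj_line p r"
      "p \<in># A - {#p#}" "q \<in># A - {#p#}" "r \<in># A - {#p#}"
      using that(5) proj_line_upper2 by (auto simp: in_diff_count)
  qed (use that in \<open>simp_all add: proj_line_upper1\<close>)
  note locked_first = this
  have "locked A p" "locked A q" "locked A r"
    using locked_first[of p q r A] locked_first[of q p r A] locked_first[of r p q A] pqr
    by (simp_all add: add_mset_commute)
  then show ?thesis
    unfolding rigid_def using nondegenerate_double_triangle[OF assms] pqr(5) by auto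
qed

lemma size_double_triangle: "double_triangle A \<Longrightarrow> size A = 6"
  unfolding double_triangle_def by auto

lemma double_triangle_not_proj_equiv_six_std:
  assumes "double_triangle A"
  shows "\<not> proj_equiv A six_std"
proof
  assume "proj_equiv A six_std"
  then have "card (set_mset A) = 6"
    using card_set_mset_proj_equiv card_set_mset_six_std by metis
  moreover have "card (set_mset A) \<le> 3"
    using assms unfolding double_triangle_def by (auto simp: card_insert_if)
  ultimately show False
    by simp
qed

section \<open>Classification of small rigid configurations\<close>

lemma subset_mset_size_eq:
  assumes "M \<subseteq># N" "size N \<le> size M"
  shows "M = N"
  using assms mset_subset_size subset_mset.le_less by fastforce

lemma mset_eq_if_distinct_subset:
  assumes "distinct xs" "set xs \<subseteq> set_mset A" "size A \<le> length xs"
  shows "A = mset xs"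
proof -
  have "mset xs = mset_set (set xs)"
    using assms(1) by (simp add: mset_set_set)
  also have "\<dots> \<subseteq># mset_set (set_mset A)"
    using assms(2) by (rule subset_imp_msubset_mset_set) simp
  also have "\<dots> \<subseteq># A"
    by (rule mset_set_set_mset_msubset)
  finally show ?thesis
    using assms(3) by (intro subset_mset_size_eq[symmetric]) auto
qed

lemma mset_eq_doubles:
  assumes "p \<noteq> q" "p \<noteq> r" "q \<noteq> r" "2 \<le> count A p" "2 \<le> count A q" "2 \<le> count A r"
    "size A \<le> 6"
  shows "A = {#p, p, q, q, r, r#}"
proof -
  have "count {#p, p, q, q, r, r#} z \<le> count A z" for z
    using assms(1-6) assms(1-3)[symmetric] by (cases "z = p"; cases "z = q"; cases "z = r") simp_all
  then have "{#p, p, q, q, r, r#} \<subseteq># A"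
    by (simp add: subseteq_mset_def)
  then show ?thesis
    using assms(7) by (intro subset_mset_size_eq[symmetric]) auto
qed

lemma double_triangle_if_no_simple_point:
  fixes A :: "(real^3) set multiset"
  assumes points: "set_mset A \<subseteq> proj_points" and nd: "nondegenerate A" and size: "size A \<le> 6"
    and no_simple: "\<And>z. z \<in># A \<Longrightarrow> count A z \<noteq> 1"
  shows "double_triangle A"
proof -
  obtain p where p: "p \<in># A" "\<not> p \<subseteq> {0}"
    using nondegenerate_not_on_line[OF nd subspace_single_0] by auto
  have "p \<in> proj_points"
    using p(1) points by auto
  then have "dim p \<le> 2"
    by (simp add: dim_proj_point)
  then obtain q where q: "q \<in># A" "\<not> q \<subseteq> p"
    by (rule nondegenerate_not_on_line[OF nd subspace_proj_point[OF \<open>p \<in> proj_points\<close>]])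
  have "q \<in> proj_points"
    using q(1) points by auto
  obtain r where r: "r \<in># A" "\<not> r \<subseteq> proj_line p q"
    by (rule nondegenerate_not_on_line[OF nd subspace_proj_line
          dim_proj_line_le[OF \<open>p \<in> proj_points\<close> \<open>q \<in> proj_points\<close>]])
  have "p \<noteq> q" "p \<noteq> r" "q \<noteq> r"
    using q(2) r(2) proj_line_upper1[of p q] proj_line_upper2[of q p] by auto
  moreover have "2 \<le> count A z" if "z \<in># A" for z
  proof -
    have "0 < count A z"
      using that by simp
    then show ?thesis
      using no_simple[OF that] by linarith
  qed
  ultimately have "A = {#p, p, q, q, r, r#}"
    using p(1) q(1) r(1) size by (intro mset_eq_doubles) auto
  moreover have "nondegenerate {#p, q, r#}"
    using \<open>p \<noteq> q\<close> r points
    by (simp add: nondegenerate_triangle_iff \<open>p \<in> proj_points\<close> \<open>q \<in> proj_points\<close> subset_iff)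
  ultimately show ?thesis
    unfolding double_triangle_def using p(1) q(1) r(1) points by blast
qed

locale crossing_lines =
  fixes a b c d e :: "(real^3) set"
  assumes points: "a \<in> proj_points" "b \<in> proj_points" "c \<in> proj_points" "d \<in> proj_points"
      "e \<in> proj_points"
    and distinct: "b \<noteq> c" "d \<noteq> e" "a \<noteq> b" "a \<noteq> c" "a \<noteq> d" "a \<noteq> e"
    and on_lines: "a \<subseteq> proj_line b c" "a \<subseteq> proj_line d e"
    and lines_neq: "proj_line b c \<noteq> proj_line d e"
begin

lemma swap_second_line: "crossing_lines a b c e d"
  using points distinct on_lines lines_neq by unfold_locales (auto simp: proj_line_commute)

lemma meet_point: "x \<in> proj_points \<Longrightarrow> x \<subseteq> proj_line b c \<Longrightarrow> x \<subseteq> proj_line d e \<Longrightarrow> x = a"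
  using proj_lines_meet_once[OF subspace_proj_line dim_proj_line_le[OF points(2,3)]
      subspace_proj_line dim_proj_line_le[OF points(4,5)] lines_neq _ points(1) _ on_lines(1) _
      on_lines(2)]
  by blast

lemma off_lines: "\<not> b \<subseteq> proj_line d e" "\<not> c \<subseteq> proj_line d e"
  "\<not> d \<subseteq> proj_line b c" "\<not> e \<subseteq> proj_line b c"
  using meet_point points distinct proj_line_upper1 proj_line_upper2 by metis+

lemma distinct_points: "b \<noteq> d" "b \<noteq> e" "c \<noteq> d" "c \<noteq> e"
  using off_lines proj_line_upper1 proj_line_upper2 by metis+

lemma lines_through_a: "proj_line b a = proj_line b c" "proj_line e a = proj_line d e"
  using proj_line_through[OF points(2,3,1) on_lines(1)] proj_line_through[OF points(5,4,1)]
    on_lines(2) distinct(3,6) proj_line_commute[of d e] by auto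

lemma diagonal_point_off_line_be:
  assumes "f \<in> proj_points" "\<not> f \<subseteq> proj_line b c" "f \<subseteq> proj_line b d"
  shows "\<not> f \<subseteq> proj_line b e"
proof
  assume "f \<subseteq> proj_line b e"
  have "f \<noteq> b"
    using assms(2) proj_line_upper1 by blast
  then have "proj_line b d = proj_line b e"
    using proj_line_through[OF points(2,4) assms(1,3)] proj_line_through[OF points(2,5) assms(1)]
      \<open>f \<subseteq> proj_line b e\<close> by simp
  then have "proj_line b e = proj_line d e"
    using proj_line_upper1[of b e] proj_line_upper2[of d b] proj_line_upper2[of e b] distinct(2)
    by (intro proj_line_unique[OF subspace_proj_line dim_proj_line_le[OF points(2,5)] points(4,5)])
      auto
  then show False
    using off_lines(1) proj_line_upper1[of b e] by simp
qed

lemma quadrangle_proj_equiv_six_std: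
  assumes f: "f \<in> proj_points" "\<not> f \<subseteq> proj_line b c" "\<not> f \<subseteq> proj_line d e"
    and diagonals: "f \<subseteq> proj_line b d" "f \<subseteq> proj_line c e"
  shows "proj_equiv six_std {#a, b, c, d, e, f#}"
proof -
  have "f \<noteq> b" "f \<noteq> e"
    using f(2,3) proj_line_upper1[of b c] proj_line_upper2[of e d] by blast+
  have "nondegenerate {#b, a, e#}"
    using points distinct(3) off_lines(4) lines_through_a(1)
    by (simp add: nondegenerate_triangle_iff)
  then have "nondegenerate {#b, e, a#}"
    by (simp add: add_mset_commute)
  moreover have "\<not> f \<subseteq> proj_line e a" "\<not> f \<subseteq> proj_line b a" "\<not> f \<subseteq> proj_line b e"
    using f lines_through_a diagonal_point_off_line_be diagonals(1) by auto
  ultimately obtain x y z where xyz: "span {x, y, z} = UNIV" "b = span {x}" "e = span {y}"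
    "a = span {z}" "f = span {x + y + z}"
    by (rule projective_frameE[OF points(2,5,1) f(1)])
  have "proj_line e f = proj_line e c" "proj_line b f = proj_line b d"
    using proj_line_through[OF points(5,3) f(1)] proj_line_through[OF points(2,4) f(1)]
      diagonals proj_line_commute[of c e] \<open>f \<noteq> b\<close> \<open>f \<noteq> e\<close> by simp_all
  then have lines: "proj_line b c = span {x, z}" "proj_line d e = span {y, z}"
    "proj_line e c = span {y, x + y + z}" "proj_line b d = span {x, x + y + z}"
    using lines_through_a xyz by (simp_all add: proj_line_span)
  have "c \<subseteq> span {x, z}" "c \<subseteq> span {y, x + y + z}"
    "d \<subseteq> span {y, z}" "d \<subseteq> span {x, y + x + z}"
    using lines proj_line_upper2[of c b] proj_line_upper2[of c e] proj_line_upper1[of d e]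
      proj_line_upper2[of d b] by (simp_all add: add.commute[of y x])
  moreover have "proj_line b c \<noteq> proj_line e c" "proj_line d e \<noteq> proj_line b d"
    using off_lines(1,4) proj_line_upper1[of e c] proj_line_upper1[of b d] by blast+
  then have "span {x, z} \<noteq> span {y, x + y + z}" "span {y, z} \<noteq> span {x, y + x + z}"
    using lines by (simp_all add: add.commute[of y x])
  moreover have "span {x} \<noteq> span {z}" "span {y} \<noteq> span {z}"
    using distinct(3,6) by (simp_all only: xyz)
  ultimately have "c = span {x + z}" "d = span {y + z}"
    using frame_diagonal_point[of x z c y] frame_diagonal_point[of y z d x] points(3,4) by blast+
  then have "image_mset ((`) (frame_map x y z)) six_std = {#a, b, c, d, e, f#}"
    using xyz by (simp add: six_std_def frame_map_span_vector add_mset_commute)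
  then show ?thesis
    using proj_equiv_frame_map[OF xyz(1), of six_std] by simp
qed

lemma not_locked_on_crossing_lines:
  fixes A :: "(real^3) set multiset"
  assumes points_A: "set_mset A \<subseteq> proj_points" and simple: "count A y = 1" and "y \<noteq> a"
    and y: "y \<subseteq> proj_line b c \<or> y \<subseteq> proj_line d e"
    and others: "\<And>z. z \<in># A \<Longrightarrow> z \<noteq> y \<Longrightarrow> z \<subseteq> proj_line b c \<or> z \<subseteq> proj_line d e"
  shows "\<not> locked A y"
proof -
  have "y \<in># A"
    using simple by (intro count_inI) simp
  then have "\<not> (y \<subseteq> proj_line b c \<and> y \<subseteq> proj_line d e)"
    using meet_point points_A \<open>y \<noteq> a\<close> by blast
  moreover note lines = subspace_proj_line dim_proj_line_le[OF points(2,3)]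
    subspace_proj_line dim_proj_line_le[OF points(4,5)]
  ultimately show ?thesis
    using y others not_locked_if_others_on_two_lines[OF points_A simple lines]
      not_locked_if_others_on_two_lines[OF points_A simple lines(3,4,1,2)] by blast
qed

lemma on_crossing_lines: "y \<in> {a, b, c, d, e} \<Longrightarrow> y \<subseteq> proj_line b c \<or> y \<subseteq> proj_line d e"
  using on_lines proj_line_upper1[of b c] proj_line_upper2[of c b] proj_line_upper1[of d e]
    proj_line_upper2[of e d]
  by blast

lemma size_without_sixth_point:
  fixes A :: "(real^3) set multiset"
  assumes points_A: "set_mset A \<subseteq> proj_points" and locked: "\<And>y. y \<in># A \<Longrightarrow> locked A y"
    and five: "set_mset A = {a, b, c, d, e}"
  shows "9 \<le> size A"
proof -
  have twice: "2 \<le> count A y" if "y \<in> {b, c, d, e}" for y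
  proof (rule ccontr)
    assume "\<not> 2 \<le> count A y"
    moreover have "y \<in># A"
      using that five by auto
    moreover have "0 < count A y"
      using \<open>y \<in># A\<close> by simp
    ultimately have "count A y = 1"
      by linarith
    moreover have "y \<noteq> a"
      using that distinct(3-6) by blast
    moreover have "y \<subseteq> proj_line b c \<or> y \<subseteq> proj_line d e"
      using that by (intro on_crossing_lines) simp
    moreover have "z \<subseteq> proj_line b c \<or> z \<subseteq> proj_line d e" if "z \<in># A" for z
      using that five by (intro on_crossing_lines) simp
    ultimately have "\<not> locked A y"
      by (intro not_locked_on_crossing_lines[OF points_A])
    then show False
      using locked \<open>y \<in># A\<close> by blast
  qed
  have "1 \<le> count A a" "2 \<le> count A b" "2 \<le> count A c" "2 \<le> count A d" "2 \<le> count A e"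
    using five twice by (simp_all add: Suc_le_eq)
  moreover have "size A = count A a + count A b + count A c + count A d + count A e"
    unfolding size_multiset_overloaded_eq five using distinct distinct_points by simp
  ultimately show ?thesis
    by linarith
qed

lemma off_second_line: "y \<in> {a, b, c, d, e} \<Longrightarrow> \<not> y \<subseteq> proj_line d e \<Longrightarrow> y \<in> {b, c}"
  using on_lines(2) proj_line_upper1[of d e] proj_line_upper2[of e d] by blast

lemma off_first_line: "y \<in> {a, b, c, d, e} \<Longrightarrow> \<not> y \<subseteq> proj_line b c \<Longrightarrow> y \<in> {d, e}"
  using on_lines(1) proj_line_upper1[of b c] proj_line_upper2[of c b] by blast

lemma sixth_point_off_lines:
  fixes A :: "(real^3) set multiset"
  assumes points_A: "set_mset A \<subseteq> proj_points" and simple: "count A f = 1"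
    and locked: "locked A f" and "f \<noteq> a"
    and others: "\<And>y. y \<in># A \<Longrightarrow> y \<noteq> f \<Longrightarrow> y \<in> {a, b, c, d, e}"
  shows "\<not> f \<subseteq> proj_line b c \<and> \<not> f \<subseteq> proj_line d e"
proof -
  have "z \<subseteq> proj_line b c \<or> z \<subseteq> proj_line d e" if "z \<in># A" "z \<noteq> f" for z
    using others[OF that] by (rule on_crossing_lines)
  then show ?thesis
    using not_locked_on_crossing_lines[OF points_A simple \<open>f \<noteq> a\<close>] locked by blast
qed

lemma transversal_through_sixth_point:
  assumes off: "\<not> f \<subseteq> proj_line b c" "\<not> f \<subseteq> proj_line d e"
    and uw: "u \<in> {a, b, c, d, e}" "w \<in> {a, b, c, d, e}" "u \<noteq> w" "f \<subseteq> proj_line u w"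
  shows "\<exists>\<beta>\<in>{b, c}. \<exists>\<delta>\<in>{d, e}. proj_line u w = proj_line \<beta> \<delta>"
proof -
  have "u \<in> proj_points" "w \<in> proj_points"
    using uw(1,2) points by blast+
  then have not_both: "\<not> (u \<subseteq> L \<and> w \<subseteq> L)" if "L = proj_line b c \<or> L = proj_line d e" for L
    using that off uw(3,4) points dim_proj_line_le
    by (metis proj_line_unique subspace_proj_line)
  then have "(\<not> u \<subseteq> proj_line d e \<and> \<not> w \<subseteq> proj_line b c)
      \<or> (\<not> u \<subseteq> proj_line b c \<and> \<not> w \<subseteq> proj_line d e)"
    using on_crossing_lines[OF uw(1)] on_crossing_lines[OF uw(2)] by blast
  then show ?thesis
    using off_first_line off_second_line uw(1,2) proj_line_commute by metis
qed

lemma transversals_through_sixth_point_eq: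
  assumes f: "f \<in> proj_points" "\<not> f \<subseteq> proj_line b c" "\<not> f \<subseteq> proj_line d e"
    and ends: "\<beta> \<in> {b, c}" "\<beta>' \<in> {b, c}" "\<delta> \<in> {d, e}" "\<delta>' \<in> {d, e}"
    and through: "f \<subseteq> proj_line \<beta> \<delta>" "f \<subseteq> proj_line \<beta>' \<delta>'"
    and common: "\<beta> = \<beta>' \<or> \<delta> = \<delta>'"
  shows "proj_line \<beta> \<delta> = proj_line \<beta>' \<delta>'"
proof -
  have "\<beta> \<subseteq> proj_line b c" "\<delta> \<subseteq> proj_line d e"
    using ends(1,3) proj_line_upper1 proj_line_upper2 by blast+
  then have "f \<noteq> \<beta>" "f \<noteq> \<delta>"
    using f(2,3) by blast+
  have "\<beta> \<in> proj_points" "\<beta>' \<in> proj_points" "\<delta> \<in> proj_points" "\<delta>' \<in> proj_points"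
    using ends points by blast+
  note through_f = proj_line_through[OF _ _ f(1)]
  from common show ?thesis
  proof
    assume "\<beta> = \<beta>'"
    then show ?thesis
      using through_f[of \<beta> \<delta>] through_f[of \<beta> \<delta>'] through \<open>f \<noteq> \<beta>\<close>
        \<open>\<beta> \<in> proj_points\<close> \<open>\<delta> \<in> proj_points\<close> \<open>\<delta>' \<in> proj_points\<close> by simp
  next
    assume "\<delta> = \<delta>'"
    then show ?thesis
      using through_f[of \<delta> \<beta>] through_f[of \<delta> \<beta>'] through \<open>f \<noteq> \<delta>\<close>
        \<open>\<beta> \<in> proj_points\<close> \<open>\<beta>' \<in> proj_points\<close> \<open>\<delta> \<in> proj_points\<close>
      by (simp add: proj_line_commute)
  qed
qed

lemma sixth_point_diagonals:
  fixes A :: "(real^3) set multiset"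
  assumes points_A: "set_mset A \<subseteq> proj_points" and simple: "count A f = 1"
    and locked: "locked A f" and "f \<noteq> a"
    and others: "\<And>y. y \<in># A \<Longrightarrow> y \<noteq> f \<Longrightarrow> y \<in> {a, b, c, d, e}"
  shows "(f \<subseteq> proj_line b d \<and> f \<subseteq> proj_line c e) \<or> (f \<subseteq> proj_line b e \<and> f \<subseteq> proj_line c d)"
proof -
  have "f \<in># A"
    using simple by (intro count_inI) simp
  then have f: "f \<in> proj_points" "\<not> f \<subseteq> proj_line b c" "\<not> f \<subseteq> proj_line d e"
    using points_A sixth_point_off_lines[OF assms] by blast+
  have in_five: "y \<in> {a, b, c, d, e}" if "y \<in># A - {#f#}" for y
    using that others in_diff_single_simple[OF simple] by blast
  obtain p q r s where pqrs:
    "p \<in># A - {#f#}" "q \<in># A - {#f#}" "r \<in># A - {#f#}" "s \<in># A - {#f#}"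
    "p \<noteq> q" "r \<noteq> s" "f \<subseteq> proj_line p q" "f \<subseteq> proj_line r s"
    "proj_line p q \<noteq> proj_line r s"
    using points_A locked by (rule lockedE)
  obtain \<beta>1 \<delta>1 where 1: "\<beta>1 \<in> {b, c}" "\<delta>1 \<in> {d, e}" "proj_line p q = proj_line \<beta>1 \<delta>1"
    using transversal_through_sixth_point[OF f(2,3) in_five[OF pqrs(1)] in_five[OF pqrs(2)]
        pqrs(5,7)]
    by blast
  obtain \<beta>2 \<delta>2 where 2: "\<beta>2 \<in> {b, c}" "\<delta>2 \<in> {d, e}" "proj_line r s = proj_line \<beta>2 \<delta>2"
    using transversal_through_sixth_point[OF f(2,3) in_five[OF pqrs(3)] in_five[OF pqrs(4)]
        pqrs(6,8)]
    by blast
  have on_both: "f \<subseteq> proj_line \<beta>1 \<delta>1" "f \<subseteq> proj_line \<beta>2 \<delta>2"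
    using pqrs(7,8) 1(3) 2(3) by simp_all
  have "\<not> (\<beta>1 = \<beta>2 \<or> \<delta>1 = \<delta>2)"
    using transversals_through_sixth_point_eq[OF f 1(1) 2(1) 1(2) 2(2) on_both] 1(3) 2(3) pqrs(9)
    by auto
  then have "\<beta>1 = b \<and> \<beta>2 = c \<or> \<beta>1 = c \<and> \<beta>2 = b" "\<delta>1 = d \<and> \<delta>2 = e \<or> \<delta>1 = e \<and> \<delta>2 = d"
    using 1(1,2) 2(1,2) by blast+
  then show ?thesis
    using on_both by (elim disjE conjE) simp_all
qed

lemma proj_equiv_six_std_if_sixth_point:
  fixes A :: "(real^3) set multiset"
  assumes points_A: "set_mset A \<subseteq> proj_points" and locked: "\<And>y. y \<in># A \<Longrightarrow> locked A y"
    and A: "A = {#a, b, c, d, e, f#}" and distinct_six: "distinct [a, b, c, d, e, f]"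
  shows "proj_equiv A six_std"
proof -
  have "count A f = 1" "f \<noteq> a" "\<And>y. y \<in># A \<Longrightarrow> y \<noteq> f \<Longrightarrow> y \<in> {a, b, c, d, e}"
    using A distinct_six by auto
  moreover have "locked A f"
    using A locked by simp
  ultimately have f: "\<not> f \<subseteq> proj_line b c \<and> \<not> f \<subseteq> proj_line d e"
    and diagonals: "(f \<subseteq> proj_line b d \<and> f \<subseteq> proj_line c e)
      \<or> (f \<subseteq> proj_line b e \<and> f \<subseteq> proj_line c d)"
    by (simp_all add: sixth_point_off_lines[OF points_A] sixth_point_diagonals[OF points_A])
  have "f \<in> proj_points"
    using A points_A by simp
  from diagonals show ?thesis
  proof
    assume "f \<subseteq> proj_line b d \<and> f \<subseteq> proj_line c e"
    then have "proj_equiv six_std {#a, b, c, d, e, f#}"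
      using \<open>f \<in> proj_points\<close> f by (intro quadrangle_proj_equiv_six_std) blast+
    then show ?thesis
      using A by (simp add: proj_equiv_sym)
  next
    assume crossed: "f \<subseteq> proj_line b e \<and> f \<subseteq> proj_line c d"
    interpret swapped: crossing_lines a b c e d
      by (rule swap_second_line)
    have "proj_equiv six_std {#a, b, c, e, d, f#}"
      using \<open>f \<in> proj_points\<close> f crossed proj_line_commute[of d e]
      by (intro swapped.quadrangle_proj_equiv_six_std) simp_all
    then show ?thesis
      using A by (simp add: proj_equiv_sym add_mset_commute)
  qed
qed

end

lemma proj_equiv_six_std_if_simple_point:
  fixes A :: "(real^3) set multiset"
  assumes points_A: "set_mset A \<subseteq> proj_points" and rigid: "rigid A" and size: "size A \<le> 6"
    and simple: "count A a = 1"
  shows "proj_equiv A six_std"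
proof -
  have locked: "locked A y" if "y \<in># A" for y
    using rigid that by (simp add: rigid_def)
  have "a \<in># A"
    using simple by (intro count_inI) simp
  from points_A locked[OF this] obtain b c d e where bcde:
    "b \<in># A - {#a#}" "c \<in># A - {#a#}" "d \<in># A - {#a#}" "e \<in># A - {#a#}"
    "b \<noteq> c" "d \<noteq> e" "a \<subseteq> proj_line b c" "a \<subseteq> proj_line d e"
    "proj_line b c \<noteq> proj_line d e"
    by (rule lockedE)
  then have in_A: "b \<in># A" "c \<in># A" "d \<in># A" "e \<in># A" "b \<noteq> a" "c \<noteq> a" "d \<noteq> a" "e \<noteq> a"
    unfolding in_diff_single_simple[OF simple] by blast+
  interpret crossing_lines a b c d e
    by (unfold_locales; use points_A \<open>a \<in># A\<close> in_A bcde(5-9) in blast)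
  have "\<not> set_mset A \<subseteq> {a, b, c, d, e}"
  proof
    assume "set_mset A \<subseteq> {a, b, c, d, e}"
    moreover have "{a, b, c, d, e} \<subseteq> set_mset A"
      using \<open>a \<in># A\<close> in_A by simp
    ultimately have "set_mset A = {a, b, c, d, e}"
      by (rule subset_antisym)
    then show False
      using size_without_sixth_point[OF points_A locked] size by auto
  qed
  then obtain f where f: "f \<in># A" "f \<notin> {a, b, c, d, e}"
    by blast
  have distinct_six: "distinct [a, b, c, d, e, f]"
    using f(2) distinct distinct_points distinct[symmetric] distinct_points[symmetric] by simp blast
  moreover have "A = mset [a, b, c, d, e, f]"
    using distinct_six \<open>a \<in># A\<close> in_A f(1) size by (intro mset_eq_if_distinct_subset) auto
  ultimately show ?thesis
    using proj_equiv_six_std_if_sixth_point[OF points_A locked] by simp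
qed

lemma rigid_small_cases:
  fixes A :: "(real^3) set multiset"
  assumes "set_mset A \<subseteq> proj_points" "rigid A" "size A \<le> 6"
  shows "double_triangle A \<or> proj_equiv A six_std"
proof (cases "\<exists>a \<in># A. count A a = 1")
  case True
  then show ?thesis
    using proj_equiv_six_std_if_simple_point[OF assms] by blast
next
  case False
  then show ?thesis
    using double_triangle_if_no_simple_point[OF assms(1) _ assms(3)] assms(2)
    by (auto simp: rigid_def)
qed

theorem proposition5p2:
  shows "(\<forall>A :: (real^3) set multiset.
            set_mset A \<subseteq> proj_points \<and> rigid A \<longrightarrow> size A \<ge> 6)
       \<and> (\<forall>A :: (real^3) set multiset.
            set_mset A \<subseteq> proj_points \<and> size A = 6 \<longrightarrow>
              (rigid A \<longleftrightarrow> double_triangle A \<or> proj_equiv A six_std))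
       \<and> (\<forall>A B. double_triangle A \<and> double_triangle B \<longrightarrow> proj_equiv A B)
       \<and> (\<forall>A. \<not> (double_triangle A \<and> proj_equiv A six_std))"
proof (intro conjI allI impI)
  fix A :: "(real^3) set multiset"
  assume "set_mset A \<subseteq> proj_points \<and> rigid A"
  then show "size A \<ge> 6"
    using rigid_small_cases[of A] size_double_triangle size_proj_equiv size_six_std
    by (cases "size A \<le> 6") fastforce+
next
  fix A :: "(real^3) set multiset"
  assume "set_mset A \<subseteq> proj_points \<and> size A = 6"
  then show "rigid A \<longleftrightarrow> double_triangle A \<or> proj_equiv A six_std"
    using rigid_small_cases[of A] rigid_double_triangle
      rigid_proj_equiv[OF proj_equiv_sym rigid_six_std] by auto
qed (use proj_equiv_double_triangles double_triangle_not_proj_equiv_six_std in blast)+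

end
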